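(* Let $(X,\mathtt{d})$ be an instance of metric $k$-center clustering with $z$ outliers, $|X|=n$, $\gamma=z/n$, and let $\epsilon>0$ and $\eta\in(0,1/2)$. Run Algorithm 1 (described in the context) with $t=\frac{ck}{1-\eta}$ where $c=2+\frac{2}{k(1-\eta)}\ln\frac{1}{\eta}$, and let $E$ be its output. Then with probability at least $1-2\eta$, $\phi_{\epsilon}(X,E)\leq 2r_{\mathtt{opt}}$.
   Context: Let $(X,\mathtt{d})$ be a finite metric space with $|X|=n$ and let $k,z$ be positive integers with $z<n$. The $k$-center clustering with $z$ outliers problem asks for $X'\subseteq X$ with $|X'|\geq n-z$ and centers $c_1,\dots,c_k\in X$ minimizing $\max_{p\in X'}\min_j\mathtt{d}(p,c_j)$; $r_{\mathtt{opt}}$ denotes the optimal value. For $p\in X$ and $E\subseteq X$, $\mathtt{d}(p,E)=\min_{q\in E}\mathtt{d}(p,q)$. For $\epsilon\geq 0$ and a set $A\subseteq X$ (of any size), $\phi_\epsilon(X,A)=\min\{\max_{p\in X'}\mathtt{d}(p,A)\;:\;X'\subseteq X,\ |X'|\geq n-(1+\epsilon)z\}$. Algorithm 1 (input $(X,\mathtt{d})$, $k,z$, parameters $\epsilon>0$, $\eta\in(0,1/2)$, $t\in\mathbb{Z}^+$): Let $\gamma=z/n$ and $E=\emptyset$. Set $j=1$ and add to $E$ a set of $\frac{1}{1-\gamma}\log\frac{1}{\eta}$ vertices selected uniformly at random from $X$. Then, while $j<t$: set $j=j+1$; let $Q_j$ be the set of the $(1+\epsilon)z$ vertices of $X$ farthest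 from $E$ (w.r.t. $\mathtt{d}(\cdot,E)$); add to $E$ a set of $\frac{1+\epsilon}{\epsilon}\log\frac{1}{\eta}$ vertices selected uniformly at random from $Q_j$. Output $E$. *)

theory Defs
  imports "HOL-Probability.Probability"
begin

definition metric_on :: "'a set \<Rightarrow> ('a \<Rightarrow> 'a \<Rightarrow> real) \<Rightarrow> bool" where
  "metric_on X d \<longleftrightarrow>
     (\<forall>p\<in>X. \<forall>q\<in>X. d p q \<ge> 0 \<and> d p q = d q p \<and> (d p q = 0 \<longleftrightarrow> p = q)) \<and>
     (\<forall>p\<in>X. \<forall>q\<in>X. \<forall>r\<in>X. d p r \<le> d p q + d q r)"

definition setdist :: "('a \<Rightarrow> 'a \<Rightarrow> real) \<Rightarrow> 'a \<Rightarrow> 'a set \<Rightarrow> real" where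
  "setdist d p E = Min ((\<lambda>q. d p q) ` E)"

definition maxdist :: "('a \<Rightarrow> 'a \<Rightarrow> real) \<Rightarrow> 'a set \<Rightarrow> 'a set \<Rightarrow> real" where
  "maxdist d X' A = (if X' = {} then 0 else Max ((\<lambda>p. setdist d p A) ` X'))"

definition r_opt :: "'a set \<Rightarrow> ('a \<Rightarrow> 'a \<Rightarrow> real) \<Rightarrow> nat \<Rightarrow> nat \<Rightarrow> real" where
  "r_opt X d k z = Min {maxdist d X' C | X' C.
      X' \<subseteq> X \<and> card X' \<ge> card X - z \<and> C \<subseteq> X \<and> C \<noteq> {} \<and> card C \<le> k}"

definition phi :: "'a set \<Rightarrow> ('a \<Rightarrow> 'a \<Rightarrow> real) \<Rightarrow> nat \<Rightarrow> real \<Rightarrow> 'a set \<Rightarrow> real" where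
  "phi X d z eps A = Min {maxdist d X' A | X'.
      X' \<subseteq> X \<and> real (card X') \<ge> real (card X) - (1 + eps) * real z}"

text \<open>m vertices sampled independently and uniformly at random from S
  (with replacement); the result is the set of sampled vertices.\<close>
fun sample :: "nat \<Rightarrow> 'a set \<Rightarrow> 'a set pmf" where
  "sample 0 S = return_pmf {}"
| "sample (Suc m) S =
     pmf_of_set S \<bind> (\<lambda>x. sample m S \<bind> (\<lambda>R. return_pmf (insert x R)))"

text \<open>Q is a valid choice of "the (1+eps)z vertices of X farthest from E"
  (ties broken arbitrarily; the size (1+eps)z is rounded up and capped by n).\<close>
definition farthest_rule :: "'a set \<Rightarrow> ('a \<Rightarrow> 'a \<Rightarrow> real) \<Rightarrow> nat \<Rightarrow> real \<Rightarrow> ('a set \<Rightarrow> 'a set) \<Rightarrow> bool" where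
  "farthest_rule X d z eps Q \<longleftrightarrow>
     (\<forall>E. E \<subseteq> X \<and> E \<noteq> {} \<longrightarrow>
        Q E \<subseteq> X \<and> card (Q E) = min (card X) (nat \<lceil>(1 + eps) * real z\<rceil>) \<and>
        (\<forall>p\<in>Q E. \<forall>q\<in>X - Q E. setdist d q E \<le> setdist d p E))"

text \<open>The while loop
  "while j < t" starting at j = 1 performs ceil(t) - 1 iterations (for t \<ge> 1);
  sample sizes are rounded up; logarithms are natural.\<close>
definition algorithm1 :: "'a set \<Rightarrow> nat \<Rightarrow> ('a set \<Rightarrow> 'a set) \<Rightarrow> real \<Rightarrow> real \<Rightarrow> real \<Rightarrow> 'a set pmf" where
  "algorithm1 X z Q eps eta t =
     (let gamma = real z / real (card X);
          m1 = nat \<lceil>(1 / (1 - gamma)) * ln (1 / eta)\<rceil>;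
          m2 = nat \<lceil>((1 + eps) / eps) * ln (1 / eta)\<rceil>;
          step = (\<lambda>E. sample m2 (Q E) \<bind> (\<lambda>S. return_pmf (E \<union> S)))
      in ((\<lambda>P. P \<bind> step) ^^ (nat \<lceil>t\<rceil> - 1)) (sample m1 X))"

end

theory Submission
  imports Defs
begin

text \<open>Fix an optimal solution with inliers Xs and centers Cs of radius r, and call E good if
  phi(X, E) <= 2r. A center is hit by E if some point of E lies within r of it; by the
  triangle inequality, an inlier farther than 2r from E has an unhit center.
  If E is not good, more than (1 + eps) z points are farther than 2r from E, so all of Q(E)
  is that far from E, and at most z points of Q(E) are outliers. Hence a sample of
  ((1 + eps) / eps) ln(1 / eta) points of Q(E) contains an inlier except with probability eta,
  and then a new center gets hit. The potential 2^(number of unhit centers) of a bad E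
  (0 for good E) therefore shrinks in expectation by the factor (1 + eta) / 2 in the initial
  sample and in every round, and after the prescribed number of rounds its expectation is at
  most ((1 + eta) / 2)^t 2^k <= eta. By Markov's inequality the output is bad with probability
  at most eta.\<close>

lemma set_pmf_sample_subset:
  assumes "finite S" "S \<noteq> {}" "R \<in> set_pmf (sample m S)"
  shows "R \<subseteq> S"
  using assms(3) by (induction m arbitrary: R) (use assms(1,2) in auto)

lemma set_pmf_sample_nonempty:
  assumes "finite S" "S \<noteq> {}" "R \<in> set_pmf (sample m S)" "0 < m"
  shows "R \<noteq> {}"
  using assms by (cases m) auto

lemma emeasure_sample_disjoint:
  assumes "finite S" "S \<noteq> {}"
  shows "emeasure (measure_pmf (sample m S)) {R. R \<inter> G = {}}
           \<le> ennreal ((real (card (S - G)) / real (card S)) ^ m)"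
proof (induction m)
  case 0
  then show ?case by (simp add: measure_pmf.emeasure_le_1)
next
  case (Suc m)
  let ?B = "{R. R \<inter> G = {}}"
  let ?a = "real (card (S - G)) / real (card S)"
  have "emeasure (measure_pmf (sample (Suc m) S)) ?B
      = (\<integral>\<^sup>+x. (\<integral>\<^sup>+R. indicator ?B (insert x R) \<partial>sample m S) \<partial>pmf_of_set S)"
    by (simp add: emeasure_return)
  also have "\<dots> = (\<integral>\<^sup>+x. indicator (-G) x * emeasure (measure_pmf (sample m S)) ?B \<partial>pmf_of_set S)"
  proof (rule nn_integral_cong)
    fix x
    have "(\<lambda>R. indicator ?B (insert x R) :: ennreal) = (\<lambda>R. indicator (-G) x * indicator ?B R)"
      by (auto simp: indicator_def)
    then show "(\<integral>\<^sup>+R. indicator ?B (insert x R) \<partial>sample m S)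
        = indicator (-G) x * emeasure (measure_pmf (sample m S)) ?B"
      by (simp add: nn_integral_cmult_indicator)
  qed
  also have "\<dots> \<le> (\<integral>\<^sup>+x. indicator (-G) x * ennreal (?a ^ m) \<partial>pmf_of_set S)"
    by (intro nn_integral_mono mult_left_mono Suc) auto
  also have "\<dots> = ennreal (?a ^ m) * emeasure (measure_pmf (pmf_of_set S)) (-G)"
    by (subst mult.commute) (simp add: nn_integral_cmult_indicator)
  also have "\<dots> = ennreal (?a ^ m) * ennreal ?a"
    using assms
    by (simp add: emeasure_pmf_of_set Diff_eq Int_commute ennreal_of_nat_eq_real_of_nat divide_ennreal)
  also have "\<dots> = ennreal (?a ^ Suc m)"
    by (simp add: ennreal_mult[symmetric] mult.commute)
  finally show ?case .
qed

lemma power_le_of_ln_le: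
  fixes a eta :: real
  assumes "0 \<le> a" "a < 1" "0 < eta" "ln (1 / eta) / (1 - a) \<le> real m"
  shows "a ^ m \<le> eta"
proof -
  have "a ^ m \<le> exp (a - 1) ^ m"
    using assms exp_ge_add_one_self[of "a - 1"] by (intro power_mono) auto
  also have "\<dots> = exp (- ((1 - a) * real m))"
    by (simp add: exp_of_nat_mult[symmetric] algebra_simps)
  also have "\<dots> \<le> exp (- ln (1 / eta))"
    using assms by (simp add: field_simps)
  also have "\<dots> = eta"
    using assms by (simp add: ln_div)
  finally show ?thesis .
qed

lemma emeasure_sample_disjoint_le:
  fixes a eta :: real
  assumes "finite S" "S \<noteq> {}" "real (card (S - G)) \<le> a * real (card S)" "a < 1" "0 < eta"
    "ln (1 / eta) / (1 - a) \<le> real m"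
  shows "emeasure (measure_pmf (sample m S)) {R. R \<inter> G = {}} \<le> ennreal eta"
proof -
  let ?b = "real (card (S - G)) / real (card S)"
  have S: "0 < real (card S)"
    using assms(1,2) by (simp add: card_gt_0_iff)
  then have b: "?b \<le> a"
    using assms(3) by (simp add: divide_le_eq)
  have a: "0 \<le> a"
    using b by (meson divide_nonneg_nonneg of_nat_0_le_iff order_trans)
  have "?b ^ m \<le> a ^ m"
    using b by (intro power_mono) auto
  also have "\<dots> \<le> eta"
    using a assms(4-6) by (rule power_le_of_ln_le)
  finally show ?thesis
    using emeasure_sample_disjoint[OF assms(1,2)] order_trans ennreal_leI by blast
qed

lemma emeasure_pmf_le_nn_integral:
  assumes "\<And>x. x \<in> A \<Longrightarrow> 1 \<le> V x"
  shows "emeasure (measure_pmf M) A \<le> (\<integral>\<^sup>+x. V x \<partial>M)"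
proof -
  have "emeasure (measure_pmf M) A = (\<integral>\<^sup>+x. indicator A x \<partial>M)"
    by simp
  also have "\<dots> \<le> (\<integral>\<^sup>+x. V x \<partial>M)"
    using assms by (intro nn_integral_mono) (auto simp: indicator_def)
  finally show ?thesis .
qed

lemma nn_integral_le_halving:
  fixes M :: "'b pmf" and f :: "'b \<Rightarrow> real"
  assumes "emeasure (measure_pmf M) B \<le> ennreal eta" "0 \<le> V0" "0 \<le> eta"
    "\<And>x. x \<in> set_pmf M \<Longrightarrow> f x \<le> V0"
    "\<And>x. x \<in> set_pmf M \<Longrightarrow> x \<notin> B \<Longrightarrow> f x \<le> V0 / 2"
  shows "(\<integral>\<^sup>+x. ennreal (f x) \<partial>M) \<le> ennreal ((1 + eta) / 2 * V0)"
proof -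
  have "(\<integral>\<^sup>+x. ennreal (f x) \<partial>M) \<le> (\<integral>\<^sup>+x. ennreal (V0/2) + ennreal (V0/2) * indicator B x \<partial>M)"
  proof (rule nn_integral_mono_AE)
    have "ennreal (V0/2) + ennreal (V0/2) = ennreal V0"
      using assms(2) by (simp flip: ennreal_plus)
    then show "AE x in measure_pmf M. ennreal (f x) \<le> ennreal (V0/2) + ennreal (V0/2) * indicator B x"
      using assms(4,5) by (auto simp: AE_measure_pmf_iff indicator_def intro!: ennreal_leI)
  qed
  also have "\<dots> = ennreal (V0/2) + ennreal (V0/2) * emeasure (measure_pmf M) B"
    by (simp add: nn_integral_add nn_integral_cmult_indicator measure_pmf.emeasure_space_1)
  also have "\<dots> \<le> ennreal (V0/2) + ennreal (V0/2) * ennreal eta"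
    by (intro add_left_mono mult_left_mono assms(1)) auto
  also have "\<dots> = ennreal ((1 + eta) / 2 * V0)"
    using assms(2,3) by (simp flip: ennreal_mult ennreal_plus add: field_simps)
  finally show ?thesis .
qed

lemma set_pmf_funpow_bind_pmf:
  assumes "\<forall>x\<in>set_pmf M. P x" "\<And>x. P x \<Longrightarrow> \<forall>y\<in>set_pmf (f x). P y"
  shows "\<forall>x\<in>set_pmf (((\<lambda>N. bind_pmf N f) ^^ n) M). P x"
  by (induction n) (use assms in auto)

lemma nn_integral_funpow_bind_pmf_le:
  assumes "\<forall>x\<in>set_pmf M. P x" "\<And>x. P x \<Longrightarrow> \<forall>y\<in>set_pmf (f x). P y"
    and "\<And>x. P x \<Longrightarrow> (\<integral>\<^sup>+y. V y \<partial>f x) \<le> q * V x"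
  shows "(\<integral>\<^sup>+x. V x \<partial>((\<lambda>N. bind_pmf N f) ^^ n) M) \<le> q ^ n * (\<integral>\<^sup>+x. V x \<partial>M)"
proof (induction n)
  case 0
  then show ?case by simp
next
  case (Suc n)
  let ?M = "((\<lambda>N. bind_pmf N f) ^^ n) M"
  have "(\<integral>\<^sup>+x. V x \<partial>bind_pmf ?M f) = (\<integral>\<^sup>+x. (\<integral>\<^sup>+y. V y \<partial>f x) \<partial>?M)"
    by simp
  also have "\<dots> \<le> (\<integral>\<^sup>+x. q * V x \<partial>?M)"
    using set_pmf_funpow_bind_pmf[OF assms(1,2)] assms(3)
    by (intro nn_integral_mono_AE) (auto simp: AE_measure_pmf_iff)
  also have "\<dots> = q * (\<integral>\<^sup>+x. V x \<partial>?M)"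
    by (simp add: nn_integral_cmult)
  also have "\<dots> \<le> q * (q ^ n * (\<integral>\<^sup>+x. V x \<partial>M))"
    using Suc by (intro mult_left_mono) auto
  finally show ?case
    by (simp add: mult.assoc)
qed

lemma setdist_le: "finite E \<Longrightarrow> q \<in> E \<Longrightarrow> setdist d p E \<le> d p q"
  unfolding setdist_def by (intro Min_le) auto

lemma setdist_attained:
  assumes "finite E" "E \<noteq> {}"
  obtains q where "q \<in> E" "setdist d p E = d p q"
proof -
  have "Min ((\<lambda>q. d p q) ` E) \<in> (\<lambda>q. d p q) ` E"
    using assms by (intro Min_in) auto
  then show ?thesis
    using that by (auto simp: setdist_def)
qed

lemma setdist_antimono: "finite E' \<Longrightarrow> E \<subseteq> E' \<Longrightarrow> E \<noteq> {} \<Longrightarrow> setdist d p E' \<le> setdist d p E"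
  unfolding setdist_def by (intro Min_antimono) auto

lemma setdist_le_maxdist: "finite X' \<Longrightarrow> p \<in> X' \<Longrightarrow> setdist d p E \<le> maxdist d X' E"
  by (auto simp: maxdist_def)

lemma maxdist_le:
  assumes "finite X'" "\<And>p. p \<in> X' \<Longrightarrow> setdist d p E \<le> b" "0 \<le> b"
  shows "maxdist d X' E \<le> b"
  using assms by (auto simp: maxdist_def)

lemma maxdist_antimono:
  assumes "finite X'" "finite E'" "E \<subseteq> E'" "E \<noteq> {}"
  shows "maxdist d X' E' \<le> maxdist d X' E"
proof (cases "X' = {}")
  case True
  then show ?thesis by (simp add: maxdist_def)
next
  case False
  have "setdist d p E' \<le> maxdist d X' E" if "p \<in> X'" for p
    using setdist_antimono[OF assms(2-4)] setdist_le_maxdist[OF assms(1) that] order_trans by blast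
  then show ?thesis
    using False assms(1) by (simp add: maxdist_def)
qed

lemma phi_le_maxdist:
  assumes "finite X" "X' \<subseteq> X" "real (card X') \<ge> real (card X) - (1 + eps) * real z"
  shows "phi X d z eps E \<le> maxdist d X' E"
  unfolding phi_def using assms by (intro Min_le) auto

lemma phi_attained:
  assumes "finite X" "0 \<le> eps"
  obtains X' where "X' \<subseteq> X" "real (card X') \<ge> real (card X) - (1 + eps) * real z"
    "phi X d z eps E = maxdist d X' E"
proof -
  let ?S = "{maxdist d X' E | X'. X' \<subseteq> X \<and> real (card X') \<ge> real (card X) - (1 + eps) * real z}"
  have "maxdist d X E \<in> ?S"
    using assms by auto
  then have "Min ?S \<in> ?S"
    using assms(1) by (intro Min_in) auto
  then show ?thesis
    using that unfolding phi_def by blast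
qed

lemma phi_antimono:
  assumes "finite X" "0 \<le> eps" "finite E'" "E \<subseteq> E'" "E \<noteq> {}"
  shows "phi X d z eps E' \<le> phi X d z eps E"
proof -
  obtain X' where X': "X' \<subseteq> X" "real (card X') \<ge> real (card X) - (1 + eps) * real z"
    "phi X d z eps E = maxdist d X' E"
    using phi_attained[OF assms(1,2)] .
  have "phi X d z eps E' \<le> maxdist d X' E'"
    using assms(1) X'(1,2) by (rule phi_le_maxdist)
  also have "\<dots> \<le> maxdist d X' E"
    using assms(3-5) X'(1) finite_subset[OF _ assms(1)] by (intro maxdist_antimono) auto
  finally show ?thesis
    using X'(3) by simp
qed

lemma r_opt_attained:
  assumes "finite X" "X \<noteq> {}" "0 < k"
  obtains Xs Cs where "Xs \<subseteq> X" "card X - z \<le> card Xs" "Cs \<subseteq> X" "Cs \<noteq> {}" "card Cs \<le> k"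
    "r_opt X d k z = maxdist d Xs Cs"
proof -
  let ?S = "{maxdist d X' C | X' C.
      X' \<subseteq> X \<and> card X' \<ge> card X - z \<and> C \<subseteq> X \<and> C \<noteq> {} \<and> card C \<le> k}"
  have "?S \<subseteq> (\<lambda>(X', C). maxdist d X' C) ` (Pow X \<times> Pow X)"
    by force
  then have "finite ?S"
    by (rule finite_subset) (use assms(1) in simp)
  moreover obtain x where "x \<in> X"
    using assms(2) by blast
  then have "maxdist d X {x} \<in> ?S"
    using assms(3) by force
  ultimately have "Min ?S \<in> ?S"
    by (intro Min_in) auto
  then show ?thesis
    using that unfolding r_opt_def by blast
qed

lemma top_subset_superlevel:
  fixes f :: "'a \<Rightarrow> real"
  assumes "finite X" "T \<subseteq> X" "card T \<le> card {x\<in>X. a < f x}"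
    and top: "\<forall>p\<in>T. \<forall>q\<in>X - T. f q \<le> f p"
  shows "T \<subseteq> {x\<in>X. a < f x}"
proof
  fix p assume p: "p \<in> T"
  show "p \<in> {x\<in>X. a < f x}"
  proof (rule ccontr)
    assume "p \<notin> {x\<in>X. a < f x}"
    then have "f p \<le> a"
      using p assms(2) by auto
    then have "{x\<in>X. a < f x} \<subseteq> T - {p}"
      using top p by (smt (verit) Diff_iff mem_Collect_eq singletonD subsetI)
    then have "card {x\<in>X. a < f x} \<le> card (T - {p})"
      using assms(1,2) finite_subset by (intro card_mono) auto
    also have "\<dots> < card T"
      using p assms(1,2) finite_subset by (intro card_Diff1_less) auto
    finally show False
      using assms(3) by simp
  qed
qed

lemma decay_power_le:
  fixes eta t :: real and k K N :: nat
  assumes eta: "0 < eta" "eta < 1" and k: "0 < k" "K \<le> k"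
    and t: "t = (2 + 2 / (real k * (1 - eta)) * ln (1 / eta)) * real k / (1 - eta)"
    and N: "t \<le> real N"
  shows "((1 + eta) / 2) ^ N * 2 ^ K \<le> eta"
proof -
  define L where "L = ln (1 / eta)"
  have L: "0 < L"
    unfolding L_def using eta by simp
  \<comment> \<open>the identity the constant c in t is chosen for\<close>
  have t_eq: "(1 - eta) / 2 * t = real k + L / (1 - eta)"
  proof -
    have ne: "1 - eta \<noteq> 0" "real k \<noteq> 0"
      using eta k by auto
    define c where "c = 2 + 2 / (real k * (1 - eta)) * L"
    have "t = c * real k / (1 - eta)"
      unfolding t c_def L_def ..
    then have "(1 - eta) / 2 * t = c * real k / 2"
      using ne by (simp add: field_simps)
    also have "\<dots> = real k + L / (1 - eta)"
      unfolding c_def using ne by (simp add: field_simps)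
    finally show ?thesis .
  qed
  have "((1 + eta) / 2) ^ N \<le> exp (- ((1 - eta) / 2)) ^ N"
    using exp_ge_add_one_self[of "- ((1 - eta) / 2)"] eta by (intro power_mono) (auto simp: field_simps)
  also have "\<dots> = exp (- ((1 - eta) / 2 * real N))"
    by (simp add: exp_of_nat_mult[symmetric] mult.commute)
  also have "\<dots> \<le> exp (- ((1 - eta) / 2 * t))"
    using N eta by (simp add: mult_left_mono)
  also have "\<dots> \<le> exp (- real k - L)"
    using L eta unfolding t_eq by (simp add: field_simps)
  also have "\<dots> = exp (-1) ^ k * eta"
    unfolding L_def using eta by (simp add: exp_diff exp_minus exp_of_nat_mult[symmetric] field_simps)
  finally have "((1 + eta) / 2) ^ N * 2 ^ K \<le> exp (-1) ^ k * eta * 2 ^ k"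
    using k eta by (intro mult_mono power_increasing) auto
  also have "\<dots> = (2 * exp (-1)) ^ k * eta"
    by (simp add: power_mult_distrib)
  also have "\<dots> \<le> eta"
  proof -
    have "2 * exp (-1) \<le> (1::real)"
      using exp_ge_add_one_self[of 1] by (simp add: exp_minus field_simps)
    then show ?thesis
      using eta by (intro mult_left_le_one_le power_le_one) auto
  qed
  finally show ?thesis .
qed

text \<open>(Xs, Cs) is any feasible solution; the argument never uses its optimality.\<close>
locale clustering_with_outliers =
  fixes X :: "'a set" and d :: "'a \<Rightarrow> 'a \<Rightarrow> real" and z :: nat and eps :: real
    and Q :: "'a set \<Rightarrow> 'a set" and Xs Cs :: "'a set"
  assumes finite_X: "finite X" and metric: "metric_on X d"
    and Xs_subset: "Xs \<subseteq> X" and Cs_subset: "Cs \<subseteq> X" and Cs_nonempty: "Cs \<noteq> {}"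
    and card_X_le: "card X \<le> card Xs + z" and z_less: "z < card X"
    and z_pos: "0 < z" and eps_pos: "0 < eps"
    and farthest: "farthest_rule X d z eps Q"
begin

definition radius :: real where
  "radius = maxdist d Xs Cs"

definition hit :: "'a set \<Rightarrow> 'a set" where
  "hit E = {c \<in> Cs. \<exists>q\<in>E. d q c \<le> radius}"

definition good :: "'a set \<Rightarrow> bool" where
  "good E \<longleftrightarrow> phi X d z eps E \<le> 2 * radius"

definition potential :: "'a set \<Rightarrow> real" where
  "potential E = (if good E then 0 else 2 ^ card (Cs - hit E))"

definition loop_step :: "nat \<Rightarrow> 'a set \<Rightarrow> 'a set pmf" where
  "loop_step m E = sample m (Q E) \<bind> (\<lambda>S. return_pmf (E \<union> S))"

lemma finite_Xs: "finite Xs"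
  using finite_subset[OF Xs_subset finite_X] .

lemma finite_Cs: "finite Cs"
  using finite_subset[OF Cs_subset finite_X] .

lemma X_nonempty: "X \<noteq> {}"
  using z_less by auto

lemma setdist_nonneg:
  assumes "E \<subseteq> X" "E \<noteq> {}" "p \<in> X"
  shows "0 \<le> setdist d p E"
proof -
  obtain q where "q \<in> E" "setdist d p E = d p q"
    using setdist_attained[OF finite_subset[OF assms(1) finite_X] assms(2)] .
  then show ?thesis
    using metric assms unfolding metric_on_def by auto
qed

lemma inlier_near_center:
  assumes "p \<in> Xs"
  obtains c where "c \<in> Cs" "d p c \<le> radius"
proof -
  obtain c where "c \<in> Cs" "setdist d p Cs = d p c"
    using setdist_attained[OF finite_Cs Cs_nonempty] .
  moreover have "setdist d p Cs \<le> radius"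
    unfolding radius_def using finite_Xs assms by (rule setdist_le_maxdist)
  ultimately show ?thesis
    using that by simp
qed

lemma radius_nonneg: "0 \<le> radius"
proof -
  obtain p where p: "p \<in> Xs"
    using card_X_le z_less by fastforce
  have "0 \<le> setdist d p Cs"
    using p Xs_subset Cs_subset Cs_nonempty by (intro setdist_nonneg) auto
  also have "\<dots> \<le> radius"
    unfolding radius_def using finite_Xs p by (rule setdist_le_maxdist)
  finally show ?thesis .
qed

lemma setdist_le_if_hit:
  assumes "E \<subseteq> X" "p \<in> X" "c \<in> hit E" "d p c \<le> radius"
  shows "setdist d p E \<le> 2 * radius"
proof -
  obtain q where q: "q \<in> E" "d q c \<le> radius" "c \<in> Cs"
    using assms(3) unfolding hit_def by blast
  have "setdist d p E \<le> d p q"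
    using finite_subset[OF assms(1) finite_X] q(1) by (rule setdist_le)
  also have "\<dots> \<le> d p c + d q c"
    using metric assms(1,2) q Cs_subset unfolding metric_on_def by (metis subsetD)
  finally show ?thesis
    using assms(4) q(2) by simp
qed

lemma good_mono:
  assumes "E \<subseteq> E'" "E' \<subseteq> X" "E \<noteq> {}" "good E"
  shows "good E'"
proof -
  have "phi X d z eps E' \<le> phi X d z eps E"
    using finite_subset[OF assms(2) finite_X] assms(1,3) eps_pos
    by (intro phi_antimono[OF finite_X]) auto
  then show ?thesis
    using assms(4) unfolding good_def by simp
qed

lemma hit_mono: "E \<subseteq> E' \<Longrightarrow> hit E \<subseteq> hit E'"
  unfolding hit_def by blast

lemma potential_nonneg: "0 \<le> potential E"
  unfolding potential_def by simp

lemma one_le_potential: "\<not> good E \<Longrightarrow> 1 \<le> potential E"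
  unfolding potential_def by simp

lemma potential_le: "potential E \<le> 2 ^ card Cs"
  unfolding potential_def using finite_Cs by (auto intro: power_increasing card_mono)

lemma potential_antimono:
  assumes "E \<subseteq> E'" "E' \<subseteq> X" "E \<noteq> {}"
  shows "potential E' \<le> potential E"
proof (cases "good E'")
  case False
  then have "\<not> good E"
    using good_mono[OF assms] by blast
  moreover have "card (Cs - hit E') \<le> card (Cs - hit E)"
    using finite_Cs hit_mono[OF assms(1)] by (intro card_mono) auto
  ultimately show ?thesis
    using False unfolding potential_def by (simp add: power_increasing)
qed (simp add: potential_def potential_nonneg)

lemma potential_halves_if_new_hit:
  assumes "E \<subseteq> E'" "E' \<subseteq> X" "E \<noteq> {}" "c \<in> hit E' - hit E"
  shows "potential E' \<le> potential E / 2"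
proof (cases "good E'")
  case False
  then have "\<not> good E"
    using good_mono[OF assms(1-3)] by blast
  moreover have "card (Cs - hit E') < card (Cs - hit E)"
    using finite_Cs hit_mono[OF assms(1)] assms(4) unfolding hit_def
    by (intro psubset_card_mono) auto
  then have "(2::real) ^ Suc (card (Cs - hit E')) \<le> 2 ^ card (Cs - hit E)"
    by (intro power_increasing) auto
  ultimately show ?thesis
    using False unfolding potential_def by simp
qed (simp add: potential_def potential_nonneg)

lemma potential_halves_if_far_inlier:
  assumes "E \<subseteq> E'" "E' \<subseteq> X" "E \<noteq> {}" "p \<in> E' \<inter> Xs" "2 * radius < setdist d p E"
  shows "potential E' \<le> potential E / 2"
proof -
  obtain c where c: "c \<in> Cs" "d p c \<le> radius"
    using inlier_near_center assms(4) by blast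
  have "c \<notin> hit E"
    using setdist_le_if_hit[of E p c] assms c Xs_subset by auto
  moreover have "c \<in> hit E'"
    unfolding hit_def using c assms(4) by blast
  ultimately show ?thesis
    using assms(1-3) by (intro potential_halves_if_new_hit) auto
qed

lemma potential_le_half_if_inlier:
  assumes "S \<subseteq> X" "p \<in> S \<inter> Xs"
  shows "potential S \<le> 2 ^ card Cs / 2"
proof (cases "good S")
  case False
  obtain c where "c \<in> Cs" "d p c \<le> radius"
    using inlier_near_center assms(2) by blast
  then have "c \<in> hit S"
    unfolding hit_def using assms(2) by blast
  then have "card (Cs - hit S) < card Cs"
    using finite_Cs by (intro psubset_card_mono) (auto simp: hit_def)
  then have "(2::real) ^ Suc (card (Cs - hit S)) \<le> 2 ^ card Cs"
    by (intro power_increasing) auto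
  then show ?thesis
    using False unfolding potential_def by simp
qed (simp add: potential_def)

lemma card_far_points_gt:
  assumes "\<not> good E"
  shows "(1 + eps) * real z < real (card {p\<in>X. 2 * radius < setdist d p E})"
proof (rule ccontr)
  let ?F = "{p\<in>X. 2 * radius < setdist d p E}"
  assume "\<not> ?thesis"
  moreover have "card (X - ?F) = card X - card ?F" "card ?F \<le> card X"
    using finite_X by (auto intro: card_Diff_subset card_mono)
  ultimately have "real (card X) - (1 + eps) * real z \<le> real (card (X - ?F))"
    by simp
  then have "phi X d z eps E \<le> maxdist d (X - ?F) E"
    using finite_X by (intro phi_le_maxdist) auto
  also have "\<dots> \<le> 2 * radius"
    using finite_X radius_nonneg by (intro maxdist_le) auto
  finally show False
    using assms unfolding good_def by simp
qed

lemma Q_subset: "E \<subseteq> X \<Longrightarrow> E \<noteq> {} \<Longrightarrow> Q E \<subseteq> X"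
  using farthest unfolding farthest_rule_def by blast

lemma card_Q: "E \<subseteq> X \<Longrightarrow> E \<noteq> {} \<Longrightarrow> card (Q E) = min (card X) (nat \<lceil>(1 + eps) * real z\<rceil>)"
  using farthest unfolding farthest_rule_def by blast

lemma Q_nonempty:
  assumes "E \<subseteq> X" "E \<noteq> {}"
  shows "Q E \<noteq> {}"
proof -
  have "0 < nat \<lceil>(1 + eps) * real z\<rceil>"
    using eps_pos z_pos by simp
  then have "card (Q E) \<noteq> 0"
    using card_Q[OF assms] z_less by simp
  then show ?thesis
    by auto
qed

lemma farthest_far_if_not_good:
  assumes "E \<subseteq> X" "E \<noteq> {}" "\<not> good E"
  shows "\<forall>p\<in>Q E. 2 * radius < setdist d p E"
proof -
  have "card (Q E) \<le> nat \<lceil>(1 + eps) * real z\<rceil>"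
    using card_Q[OF assms(1,2)] by simp
  also have "\<dots> \<le> card {p\<in>X. 2 * radius < setdist d p E}"
    using card_far_points_gt[OF assms(3)] by linarith
  finally have "Q E \<subseteq> {p\<in>X. 2 * radius < setdist d p E}"
    using farthest assms(1,2) unfolding farthest_rule_def
    by (intro top_subset_superlevel[OF finite_X Q_subset[OF assms(1,2)]]) auto
  then show ?thesis
    by blast
qed

lemma card_Q_ge_if_not_good:
  assumes "E \<subseteq> X" "E \<noteq> {}" "\<not> good E"
  shows "(1 + eps) * real z \<le> real (card (Q E))"
proof -
  have "card {p\<in>X. 2 * radius < setdist d p E} \<le> card X"
    using finite_X by (intro card_mono) auto
  then have "(1 + eps) * real z \<le> real (card X)"
    using card_far_points_gt[OF assms(3)] by linarith
  then show ?thesis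
    using card_Q[OF assms(1,2)] by (simp add: real_nat_ceiling_ge)
qed

lemma card_outliers_le:
  assumes "A \<subseteq> X"
  shows "card (A - Xs) \<le> z"
proof -
  have "card (A - Xs) \<le> card (X - Xs)"
    using assms finite_X by (intro card_mono) auto
  also have "\<dots> = card X - card Xs"
    using finite_Xs Xs_subset by (rule card_Diff_subset)
  finally show ?thesis
    using card_X_le by simp
qed

lemma set_pmf_loop_step:
  assumes "E \<subseteq> X" "E \<noteq> {}" "E' \<in> set_pmf (loop_step m E)"
  shows "E' \<subseteq> X \<and> E' \<noteq> {}"
proof -
  obtain S where "S \<in> set_pmf (sample m (Q E))" "E' = E \<union> S"
    using assms(3) unfolding loop_step_def by auto
  then have "S \<subseteq> Q E"
    using finite_subset[OF Q_subset[OF assms(1,2)] finite_X] Q_nonempty[OF assms(1,2)]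
    by (intro set_pmf_sample_subset)
  then show ?thesis
    using Q_subset[OF assms(1,2)] assms(1,2) \<open>E' = E \<union> S\<close> by auto
qed

lemma nn_integral_potential_loop_step:
  assumes E: "E \<subseteq> X" "E \<noteq> {}" and eta: "0 < eta"
    and m: "(1 + eps) / eps * ln (1 / eta) \<le> real m"
  shows "(\<integral>\<^sup>+E'. ennreal (potential E') \<partial>loop_step m E) \<le> ennreal ((1 + eta) / 2) * ennreal (potential E)"
proof -
  have Q: "finite (Q E)" "Q E \<noteq> {}" "Q E \<subseteq> X"
    using Q_subset[OF E] Q_nonempty[OF E] finite_subset[OF _ finite_X] by auto
  have supp: "S \<subseteq> Q E" if "S \<in> set_pmf (sample m (Q E))" for S
    using set_pmf_sample_subset[OF Q(1,2) that] .
  have mono: "potential (E \<union> S) \<le> potential E" if "S \<in> set_pmf (sample m (Q E))" for S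
    using E Q supp[OF that] by (intro potential_antimono) auto
  have "(\<integral>\<^sup>+E'. ennreal (potential E') \<partial>loop_step m E)
      = (\<integral>\<^sup>+S. ennreal (potential (E \<union> S)) \<partial>sample m (Q E))"
    unfolding loop_step_def by (simp add: nn_integral_return)
  also have "\<dots> \<le> ennreal ((1 + eta) / 2 * potential E)"
  proof (cases "good E")
    case True
    then show ?thesis
      using mono eta potential_nonneg[of E]
      by (intro nn_integral_le_halving[where B = "{}"]) (auto simp: potential_def)
  next
    case False
    show ?thesis
    proof (rule nn_integral_le_halving[where B = "{R. R \<inter> Xs = {}}"])
      have "real (card (Q E - Xs)) \<le> real z"
        using card_outliers_le[OF Q(3)] by simp
      also have "\<dots> \<le> 1 / (1 + eps) * real (card (Q E))"
        using card_Q_ge_if_not_good[OF E False] eps_pos by (simp add: field_simps)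
      finally have "real (card (Q E - Xs)) \<le> 1 / (1 + eps) * real (card (Q E))" .
      moreover have "ln (1 / eta) / (1 - 1 / (1 + eps)) = (1 + eps) / eps * ln (1 / eta)"
        using eps_pos by (simp add: field_simps)
      ultimately show "emeasure (measure_pmf (sample m (Q E))) {R. R \<inter> Xs = {}} \<le> ennreal eta"
        using Q(1,2) eta m eps_pos by (intro emeasure_sample_disjoint_le[where a = "1 / (1 + eps)"]) auto
    next
      fix S assume S: "S \<in> set_pmf (sample m (Q E))" "S \<notin> {R. R \<inter> Xs = {}}"
      then obtain p where "p \<in> S \<inter> Xs"
        by blast
      moreover have "E \<union> S \<subseteq> X"
        using E Q supp[OF S(1)] by auto
      ultimately show "potential (E \<union> S) \<le> potential E / 2"
        using E farthest_far_if_not_good[OF E False] supp[OF S(1)]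
        by (intro potential_halves_if_far_inlier[of E "E \<union> S" p]) auto
    qed (use mono eta potential_nonneg in auto)
  qed
  also have "\<dots> = ennreal ((1 + eta) / 2) * ennreal (potential E)"
    using eta potential_nonneg by (intro ennreal_mult) auto
  finally show ?thesis .
qed

lemma nn_integral_potential_initial_sample:
  assumes eta: "0 < eta" and m: "1 / (1 - real z / real (card X)) * ln (1 / eta) \<le> real m"
  shows "(\<integral>\<^sup>+S. ennreal (potential S) \<partial>sample m X) \<le> ennreal ((1 + eta) / 2 * 2 ^ card Cs)"
proof (rule nn_integral_le_halving[where B = "{R. R \<inter> Xs = {}}"])
  have "real (card (X - Xs)) \<le> real z / real (card X) * real (card X)"
    using card_outliers_le[of X] z_less by simp
  moreover have "real z / real (card X) < 1"
    using z_less by simp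
  ultimately show "emeasure (measure_pmf (sample m X)) {R. R \<inter> Xs = {}} \<le> ennreal eta"
    using finite_X X_nonempty eta m
    by (intro emeasure_sample_disjoint_le[where a = "real z / real (card X)"]) auto
next
  fix S assume "S \<in> set_pmf (sample m X)" "S \<notin> {R. R \<inter> Xs = {}}"
  then show "potential S \<le> 2 ^ card Cs / 2"
    using set_pmf_sample_subset[OF finite_X X_nonempty] potential_le_half_if_inlier by blast
qed (use eta potential_le in auto)

text \<open>The exponent counts the nat \<lceil>t\<rceil> - 1 loop rounds plus the initial sample; it differs
  from nat \<lceil>t\<rceil> only when t \<le> 0.\<close>
lemma nn_integral_potential_algorithm1:
  assumes eta: "0 < eta" "eta < 1"
  shows "(\<integral>\<^sup>+E. ennreal (potential E) \<partial>algorithm1 X z Q eps eta t)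
           \<le> ennreal (((1 + eta) / 2) ^ (nat \<lceil>t\<rceil> - 1 + 1) * 2 ^ card Cs)"
proof -
  define m1 where "m1 = nat \<lceil>(1 / (1 - real z / real (card X))) * ln (1 / eta)\<rceil>"
  define m2 where "m2 = nat \<lceil>((1 + eps) / eps) * ln (1 / eta)\<rceil>"
  define n where "n = nat \<lceil>t\<rceil> - 1"
  let ?q = "(1 + eta) / 2"
  have alg: "algorithm1 X z Q eps eta t = ((\<lambda>P. P \<bind> loop_step m2) ^^ n) (sample m1 X)"
    unfolding algorithm1_def Let_def m1_def m2_def n_def loop_step_def ..
  have "0 < 1 / (1 - real z / real (card X)) * ln (1 / eta)"
    using z_less eta by simp
  then have m1: "0 < m1" "1 / (1 - real z / real (card X)) * ln (1 / eta) \<le> real m1"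
    unfolding m1_def by (simp_all add: real_nat_ceiling_ge)
  have start: "\<forall>E\<in>set_pmf (sample m1 X). E \<subseteq> X \<and> E \<noteq> {}"
    using set_pmf_sample_subset[OF finite_X X_nonempty] set_pmf_sample_nonempty[OF finite_X X_nonempty]
      m1(1) by blast
  have "(\<integral>\<^sup>+E. ennreal (potential E) \<partial>algorithm1 X z Q eps eta t)
      \<le> ennreal ?q ^ n * (\<integral>\<^sup>+E. ennreal (potential E) \<partial>sample m1 X)"
    unfolding alg
  proof (rule nn_integral_funpow_bind_pmf_le[OF start])
    show "\<forall>E'\<in>set_pmf (loop_step m2 E). E' \<subseteq> X \<and> E' \<noteq> {}" if "E \<subseteq> X \<and> E \<noteq> {}" for E
      using that set_pmf_loop_step by blast
    show "(\<integral>\<^sup>+E'. ennreal (potential E') \<partial>loop_step m2 E) \<le> ennreal ?q * ennreal (potential E)"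
      if "E \<subseteq> X \<and> E \<noteq> {}" for E
      using that eta(1) by (intro nn_integral_potential_loop_step) (auto simp: m2_def real_nat_ceiling_ge)
  qed
  also have "\<dots> \<le> ennreal ?q ^ n * ennreal (?q * 2 ^ card Cs)"
    using nn_integral_potential_initial_sample[OF eta(1) m1(2)] by (intro mult_left_mono) auto
  also have "\<dots> = ennreal (?q ^ n * (?q * 2 ^ card Cs))"
    using eta by (simp add: ennreal_power ennreal_mult del: times_divide_eq_left)
  also have "?q ^ n * (?q * 2 ^ card Cs) = ?q ^ (n + 1) * 2 ^ card Cs"
    by simp
  finally show ?thesis
    unfolding n_def .
qed

lemma prob_good_algorithm1:
  assumes eta: "0 < eta" "eta < 1" and k: "0 < k" "card Cs \<le> k"
    and t: "t = (2 + 2 / (real k * (1 - eta)) * ln (1 / eta)) * real k / (1 - eta)"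
  shows "1 - eta \<le> measure_pmf.prob (algorithm1 X z Q eps eta t) {E. good E}"
proof -
  let ?M = "measure_pmf (algorithm1 X z Q eps eta t)"
  have "t \<le> real (nat \<lceil>t\<rceil> - 1 + 1)"
    by linarith
  then have decay: "((1 + eta) / 2) ^ (nat \<lceil>t\<rceil> - 1 + 1) * 2 ^ card Cs \<le> eta"
    using eta k t by (intro decay_power_le[where k = k]) auto
  have "emeasure ?M {E. \<not> good E} \<le> (\<integral>\<^sup>+E. ennreal (potential E) \<partial>?M)"
    using one_le_potential by (intro emeasure_pmf_le_nn_integral) auto
  also have "\<dots> \<le> ennreal eta"
    using nn_integral_potential_algorithm1[OF eta] decay order_trans ennreal_leI by blast
  finally have "measure ?M {E. \<not> good E} \<le> eta"
    using eta by (simp add: measure_pmf.emeasure_eq_measure)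
  moreover have "{E. good E} = space ?M - {E. \<not> good E}"
    by auto
  ultimately show ?thesis
    using measure_pmf.prob_compl[of "{E. \<not> good E}"] by simp
qed

end

theorem theorem5:
  fixes X :: "'a set" and d :: "'a \<Rightarrow> 'a \<Rightarrow> real" and k z :: nat
    and eps eta :: real and Q :: "'a set \<Rightarrow> 'a set"
  assumes "finite X" and "metric_on X d"
    and "k > 0" and "z > 0" and "z < card X"
    and "eps > 0" and "eta > 0" and "eta < 1/2"
    and "farthest_rule X d z eps Q"
  shows "let c = 2 + 2 / (real k * (1 - eta)) * ln (1 / eta);
             t = c * real k / (1 - eta)
         in measure_pmf.prob (algorithm1 X z Q eps eta t)
              {E. phi X d z eps E \<le> 2 * r_opt X d k z} \<ge> 1 - 2 * eta"
proof -
  have "X \<noteq> {}"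
    using assms(5) by auto
  then obtain Xs Cs where opt: "Xs \<subseteq> X" "card X - z \<le> card Xs" "Cs \<subseteq> X" "Cs \<noteq> {}" "card Cs \<le> k"
    and r_opt: "r_opt X d k z = maxdist d Xs Cs"
    using r_opt_attained[OF assms(1) _ assms(3)] by blast
  interpret clustering_with_outliers X d z eps Q Xs Cs
    using assms opt by unfold_locales auto
  have "1 - eta \<le> measure_pmf.prob (algorithm1 X z Q eps eta
      ((2 + 2 / (real k * (1 - eta)) * ln (1 / eta)) * real k / (1 - eta))) {E. good E}"
    using assms(3,7,8) opt(5) by (intro prob_good_algorithm1) auto
  then show ?thesis
    using assms(7) unfolding Let_def good_def radius_def r_opt by simp
qed

end
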